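(* Let $(\mathcal L,\bar{\mathcal L})$ be a solution of the dispersionless Toda lattice hierarchy. Put $k=\mathcal B_1=p+u_1(t,\bar t,s)$ and regard $\mathcal L$ as a Laurent series in $k$ (substituting $p=k-u_1$), with $\bar t$ treated as parameters and with $t_1$ playing the role of the variable $x$. Set $\mathcal P=p=k-u_1(t,\bar t,s)$. Then, with all derivatives in $t_n$ and $s$ taken at fixed $k$ and with the bracket $\{F,G\}=\frac{\partial F}{\partial k}\frac{\partial G}{\partial t_1}-\frac{\partial F}{\partial t_1}\frac{\partial G}{\partial k}$, one has for all $n\ge1$: \[ \frac{\partial\mathcal L}{\partial t_n}=\{\mathcal B_n,\mathcal L\},\qquad \frac{\partial\mathcal L}{\partial s}\,\mathcal P=\{\mathcal P,\mathcal L\},\qquad -\frac{\partial\mathcal B_n}{\partial s}\,\mathcal P=-\frac{\partial\mathcal P}{\partial t_n}-\{\mathcal P,\mathcal B_n\}, \] where $\mathcal B_n=(\mathcal L^n)_{\ge0}$ (the polynomial part in $k$, which coincides with the polynomial part in $p$). That is, $(\mathcal L,\mathcal P)$ solves the ($\mathcal L,\mathcal P$-part of the) dispersionless $1$-modified KP hierarchy.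
   Context: The dispersionless Toda lattice hierarchy: variables $t=(t_1,t_2,\dots)$, $\bar t=(\bar t_1,\bar t_2,\dots)$, $s$; unknowns are Laurent series in $p$: $\mathcal L=p+\sum_{n\ge0}u_{n+1}(t,\bar t,s)p^{-n}$ and $\bar{\mathcal L}$ with $\bar{\mathcal L}^{-1}=\bar u_0(t,\bar t,s)p^{-1}+\sum_{n\ge0}\bar u_{n+1}(t,\bar t,s)p^n$. With $\{A,B\}_{\mathrm{Toda}}=p\frac{\partial A}{\partial p}\frac{\partial B}{\partial s}-p\frac{\partial A}{\partial s}\frac{\partial B}{\partial p}$, $\mathcal B_n=(\mathcal L^n)_{\ge0}$ and $\bar{\mathcal B}_n=(\bar{\mathcal L}^{-n})_{<0}$ (projections to nonnegative/negative powers of $p$), the equations are $\partial\mathcal L/\partial t_n=\{\mathcal B_n,\mathcal L\}_{\mathrm{Toda}}$, $\partial\mathcal L/\partial\bar t_n=\{\bar{\mathcal B}_n,\mathcal L\}_{\mathrm{Toda}}$, $\partial\bar{\mathcal L}/\partial t_n=\{\mathcal B_n,\bar{\mathcal L}\}_{\mathrm{Toda}}$, $\partial\bar{\mathcal L}/\partial\bar t_n=\{\bar{\mathcal B}_n,\bar{\mathcal L}\}_{\mathrm{Toda}}$ for $n\ge1$ (derivatives at fixed $p$). *)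

theory Defs
  imports "HOL-Analysis.Analysis"
begin

text \<open>Points of the time space: (t, tbar, s), with t_n = t n and tbar_n = tb n for n \<ge> 1
  (the components t 0, tb 0 are unused spectator parameters).\<close>
type_synonym pt = "(nat \<Rightarrow> real) \<times> (nat \<Rightarrow> real) \<times> real"
type_synonym coef = "pt \<Rightarrow> real"
text \<open>A formal Laurent series in one variable (p or k): coefficient of the j-th power.\<close>
type_synonym lser = "int \<Rightarrow> coef"

definition dTc :: "nat \<Rightarrow> coef \<Rightarrow> coef" where
  "dTc n f = (\<lambda>(t, tb, s). deriv (\<lambda>y. f (t(n := y), tb, s)) (t n))"

definition dTbc :: "nat \<Rightarrow> coef \<Rightarrow> coef" where
  "dTbc n f = (\<lambda>(t, tb, s). deriv (\<lambda>y. f (t, tb(n := y), s)) (tb n))"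

definition dSc :: "coef \<Rightarrow> coef" where
  "dSc f = (\<lambda>(t, tb, s). deriv (\<lambda>y. f (t, tb, y)) s)"

definition sep_diff :: "coef \<Rightarrow> bool" where
  "sep_diff f \<longleftrightarrow>
     (\<forall>t tb s. \<forall>n\<ge>1. (\<lambda>y. f (t(n := y), tb, s)) differentiable (at (t n))
                    \<and> (\<lambda>y. f (t, tb(n := y), s)) differentiable (at (tb n)))
   \<and> (\<forall>t tb s. (\<lambda>y. f (t, tb, y)) differentiable (at s))"

definition dT :: "nat \<Rightarrow> lser \<Rightarrow> lser" where "dT n F = (\<lambda>m. dTc n (F m))"
definition dTb :: "nat \<Rightarrow> lser \<Rightarrow> lser" where "dTb n F = (\<lambda>m. dTbc n (F m))"
definition dS :: "lser \<Rightarrow> lser" where "dS F = (\<lambda>m. dSc (F m))"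

text \<open>Product (Cauchy product; the sum is finite for all series used here, since
  they are bounded above or bounded below in degree).\<close>
definition lmul :: "lser \<Rightarrow> lser \<Rightarrow> lser" where
  "lmul F G = (\<lambda>m x. (\<Sum>i | F i x * G (m - i) x \<noteq> 0. F i x * G (m - i) x))"

definition lone :: lser where "lone = (\<lambda>m x. if m = 0 then 1 else 0)"

primrec lpow :: "lser \<Rightarrow> nat \<Rightarrow> lser" where
  "lpow F 0 = lone"
| "lpow F (Suc n) = lmul F (lpow F n)"

definition lsub :: "lser \<Rightarrow> lser \<Rightarrow> lser" where "lsub F G = (\<lambda>m x. F m x - G m x)"
definition lneg :: "lser \<Rightarrow> lser" where "lneg F = (\<lambda>m x. - F m x)"

definition lshift :: "lser \<Rightarrow> lser" where "lshift F = (\<lambda>m. F (m - 1))"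
definition ldv :: "lser \<Rightarrow> lser" where "ldv F = (\<lambda>m x. of_int (m + 1) * F (m + 1) x)"

definition lpos :: "lser \<Rightarrow> lser" where "lpos F = (\<lambda>m. if 0 \<le> m then F m else (\<lambda>_. 0))"
definition lnegpart :: "lser \<Rightarrow> lser" where "lnegpart F = (\<lambda>m. if m < 0 then F m else (\<lambda>_. 0))"

definition todaBr :: "lser \<Rightarrow> lser \<Rightarrow> lser" where
  "todaBr A B = lsub (lshift (lmul (ldv A) (dS B))) (lshift (lmul (dS A) (ldv B)))"

definition Bp :: "lser \<Rightarrow> nat \<Rightarrow> lser" where "Bp L n = lpos (lpow L n)"
definition Bbar :: "lser \<Rightarrow> nat \<Rightarrow> lser" where "Bbar M n = lnegpart (lpow M n)"

text \<open>Re-expansion of a series F(p) = sum_j F_j p^j (bounded above in degree) in k = p + u,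
  i.e. substituting p = k - u and expanding (k - u)^j = sum_i (j gchoose i) (-u)^i k^(j-i).\<close>
definition toK :: "coef \<Rightarrow> lser \<Rightarrow> lser" where
  "toK u F = (\<lambda>m x. (\<Sum>j | m \<le> j \<and> F j x \<noteq> 0.
      F j x * ((of_int j :: real) gchoose nat (j - m)) * (- u x) ^ nat (j - m)))"

text \<open>For L with p-coefficients L j (so u_1 = L 0): L as a series in k.\<close>
definition Lk :: "lser \<Rightarrow> lser" where "Lk L = toK (L 0) L"

definition Pk :: "lser \<Rightarrow> lser" where
  "Pk L = (\<lambda>m x. if m = 1 then 1 else if m = 0 then - L 0 x else 0)"

definition Bk :: "lser \<Rightarrow> nat \<Rightarrow> lser" where "Bk L n = lpos (lpow (Lk L) n)"

definition kBr :: "lser \<Rightarrow> lser \<Rightarrow> lser" where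
  "kBr F G = lsub (lmul (ldv F) (dT 1 G)) (lmul (dT 1 F) (ldv G))"

end

theory Submission
  imports Defs "HOL-Computational_Algebra.Formal_Laurent_Series"
begin

text \<open>Substituting p = k - u_1 into a Laurent series bounded above in degree is a ring
  homomorphism (Vandermonde's identity for generalised binomial coefficients) that commutes
  with d/dp = d/dk and with taking the polynomial part. By the chain rule it turns a time
  derivative at fixed p into the one at fixed k minus (du_1/dt) d/dk, and these correction
  terms cancel in the bracket F_k G_{t_1} - F_{t_1} G_k. Hence all three equations may be
  checked at fixed p, where they follow from the t-flows of L alone: B_1 = p + u_1 gives
  dL/dt_1 = p (L_s - u_{1,s} L_p), the same holds for L^n, and projecting it to nonnegative
  powers gives dB_n/dt_1 = du_1/dt_n + p (B_{n,s} - u_{1,s} B_{n,p}), where the constant term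
  of the t_n-flow identifies du_1/dt_n with the s-derivative of the residue of L^n.
  At each point (t, tbar, s) the algebraic identities between series are checked in the
  field of formal Laurent series in 1/p.\<close>

unbundle fps_syntax

section \<open>Laurent series bounded above in degree\<close>

definition deg_le :: "int \<Rightarrow> lser \<Rightarrow> bool" where
  "deg_le N F \<longleftrightarrow> (\<forall>m>N. F m = (\<lambda>_. 0))"

definition bounded_deg :: "lser \<Rightarrow> bool" where
  "bounded_deg F \<longleftrightarrow> (\<exists>N. deg_le N F)"

definition ladd :: "lser \<Rightarrow> lser \<Rightarrow> lser" where
  "ladd F G = (\<lambda>m x. F m x + G m x)"

definition lconst :: "coef \<Rightarrow> lser" where
  "lconst c = (\<lambda>m. if m = 0 then c else (\<lambda>_. 0))"

lemma lsub_apply [simp]: "lsub F G m x = F m x - G m x"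
  by (simp add: lsub_def)
lemma ladd_apply [simp]: "ladd F G m x = F m x + G m x"
  by (simp add: ladd_def)
lemma lneg_apply [simp]: "lneg F m x = - F m x"
  by (simp add: lneg_def)
lemma lshift_apply [simp]: "lshift F m = F (m - 1)"
  by (simp add: lshift_def)
lemma ldv_apply [simp]: "ldv F m x = of_int (m + 1) * F (m + 1) x"
  by (simp add: ldv_def)
lemma lpos_apply [simp]: "lpos F m x = (if 0 \<le> m then F m x else 0)"
  by (simp add: lpos_def)
lemma lnegpart_apply [simp]: "lnegpart F m x = (if m < 0 then F m x else 0)"
  by (simp add: lnegpart_def)
lemma lconst_apply [simp]: "lconst c m x = (if m = 0 then c x else 0)"
  by (simp add: lconst_def)
lemma lone_eq_lconst: "lone = lconst (\<lambda>_. 1)"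
  by (auto simp: lone_def lconst_def)

lemma deg_leD: "deg_le N F \<Longrightarrow> N < m \<Longrightarrow> F m x = 0"
  by (simp add: deg_le_def)

lemma deg_le_mono: "deg_le N F \<Longrightarrow> N \<le> M \<Longrightarrow> deg_le M F"
  by (simp add: deg_le_def)

lemma lmul_eq_sum_over:
  assumes F: "deg_le N1 F" and G: "deg_le N2 G"
    and J: "finite J" "{m-N2..N1} \<subseteq> J"
  shows "lmul F G m x = (\<Sum>i\<in>J. F i x * G (m-i) x)"
proof -
  have "lmul F G m x = (\<Sum>i | F i x * G (m-i) x \<noteq> 0. F i x * G (m-i) x)"
    by (simp add: lmul_def)
  also have "\<dots> = (\<Sum>i\<in>J. F i x * G (m-i) x)"
  proof (rule sum.mono_neutral_left[OF J(1)])
    show "{i. F i x * G (m-i) x \<noteq> 0} \<subseteq> J"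
    proof
      fix i assume "i \<in> {i. F i x * G (m-i) x \<noteq> 0}"
      then have "F i x \<noteq> 0" "G (m-i) x \<noteq> 0" by auto
      then have "\<not> N1 < i" "\<not> N2 < m - i"
        using deg_leD[OF F, of i x] deg_leD[OF G, of "m-i" x] by blast+
      then show "i \<in> J" using J(2) by auto
    qed
  qed auto
  finally show ?thesis .
qed

lemma lmul_eq_sum:
  assumes "deg_le N1 F" "deg_le N2 G"
  shows "lmul F G m x = (\<Sum>i\<in>{m-N2..N1}. F i x * G (m-i) x)"
  by (rule lmul_eq_sum_over[OF assms]) auto

lemma deg_le_lmul:
  assumes "deg_le N1 F" "deg_le N2 G"
  shows "deg_le (N1 + N2) (lmul F G)"
  unfolding deg_le_def
proof (intro allI impI ext)
  fix m x assume "N1 + N2 < m"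
  then show "lmul F G m x = 0" using lmul_eq_sum[OF assms] by simp
qed

lemma deg_le_lone: "deg_le 0 lone"
  by (simp add: deg_le_def lone_def)

lemma deg_le_lpow:
  assumes "deg_le N F"
  shows "deg_le (int n * N) (lpow F n)"
proof (induction n)
  case 0
  show ?case by (simp add: deg_le_lone)
next
  case (Suc n)
  have "deg_le (N + int n * N) (lpow F (Suc n))"
    using deg_le_lmul[OF assms Suc.IH] by simp
  then show ?case by (simp add: algebra_simps)
qed

lemma deg_le_lsub: "deg_le N1 F \<Longrightarrow> deg_le N2 G \<Longrightarrow> deg_le (max N1 N2) (lsub F G)"
  by (simp add: deg_le_def lsub_def)

lemma deg_le_ladd: "deg_le N1 F \<Longrightarrow> deg_le N2 G \<Longrightarrow> deg_le (max N1 N2) (ladd F G)"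
  by (simp add: deg_le_def ladd_def)

lemma deg_le_lneg: "deg_le N F \<Longrightarrow> deg_le N (lneg F)"
  by (simp add: deg_le_def lneg_def)

lemma deg_le_lshift: "deg_le N F \<Longrightarrow> deg_le (N + 1) (lshift F)"
  by (simp add: deg_le_def)

lemma deg_le_ldv: "deg_le N F \<Longrightarrow> deg_le (N - 1) (ldv F)"
  by (simp add: deg_le_def ldv_def)

lemma deg_le_lpos: "deg_le N F \<Longrightarrow> deg_le N (lpos F)"
  by (simp add: deg_le_def lpos_def)

lemma deg_le_lnegpart: "deg_le (-1) (lnegpart F)"
  by (simp add: deg_le_def lnegpart_def)

lemma deg_le_lconst: "deg_le 0 (lconst c)"
  by (simp add: deg_le_def lconst_def)

lemma lmul_lconst: "lmul (lconst c) G m x = c x * G m x"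
proof -
  have "lmul (lconst c) G m x = (\<Sum>i\<in>{0}. lconst c i x * G (m-i) x)"
    unfolding lmul_def by (rule sum.mono_neutral_left) (auto split: if_splits)
  then show ?thesis by simp
qed

lemma bounded_degI: "deg_le N F \<Longrightarrow> bounded_deg F"
  by (auto simp: bounded_deg_def)

lemma bounded_deg_lmul [simp]: "bounded_deg F \<Longrightarrow> bounded_deg G \<Longrightarrow> bounded_deg (lmul F G)"
  unfolding bounded_deg_def by (blast intro: deg_le_lmul)

lemma bounded_deg_lsub [simp]: "bounded_deg F \<Longrightarrow> bounded_deg G \<Longrightarrow> bounded_deg (lsub F G)"
  unfolding bounded_deg_def by (blast intro: deg_le_lsub)

lemma bounded_deg_ladd [simp]: "bounded_deg F \<Longrightarrow> bounded_deg G \<Longrightarrow> bounded_deg (ladd F G)"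
  unfolding bounded_deg_def by (blast intro: deg_le_ladd)

lemma bounded_deg_lpow [simp]: "bounded_deg F \<Longrightarrow> bounded_deg (lpow F n)"
  unfolding bounded_deg_def by (blast intro: deg_le_lpow)

lemma bounded_deg_lneg [simp]: "bounded_deg F \<Longrightarrow> bounded_deg (lneg F)"
  unfolding bounded_deg_def by (blast intro: deg_le_lneg)

lemma bounded_deg_lshift [simp]: "bounded_deg F \<Longrightarrow> bounded_deg (lshift F)"
  unfolding bounded_deg_def by (blast intro: deg_le_lshift)

lemma bounded_deg_ldv [simp]: "bounded_deg F \<Longrightarrow> bounded_deg (ldv F)"
  unfolding bounded_deg_def by (blast intro: deg_le_ldv)

lemma bounded_deg_lpos [simp]: "bounded_deg F \<Longrightarrow> bounded_deg (lpos F)"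
  unfolding bounded_deg_def by (blast intro: deg_le_lpos)

lemma bounded_deg_lnegpart [simp]: "bounded_deg (lnegpart F)"
  unfolding bounded_deg_def by (blast intro: deg_le_lnegpart)

lemma bounded_deg_lconst [simp]: "bounded_deg (lconst c)"
  unfolding bounded_deg_def by (blast intro: deg_le_lconst)

lemma bounded_deg_lone [simp]: "bounded_deg lone"
  unfolding bounded_deg_def by (blast intro: deg_le_lone)

section \<open>Pointwise embedding into formal Laurent series\<close>

text \<open>At a point x, a series in p bounded above in degree is read as a formal Laurent series
  in X = 1/p: the coefficient of p^m becomes that of X^(-m).\<close>

definition fls_at :: "pt \<Rightarrow> lser \<Rightarrow> real fls" where
  "fls_at x F = Abs_fls (\<lambda>n. F (-n) x)"

lemma fls_at_nth_deg_le:
  assumes "deg_le N F"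
  shows "fls_at x F $$ n = F (-n) x"
proof -
  have "(\<lambda>n. F (-n) x) \<in> {f. \<forall>\<^sub>\<infinity>n::nat. f (- int n) = 0}"
    unfolding MOST_nat
  proof (intro CollectI exI allI impI)
    fix k :: nat
    assume "nat N < k"
    then show "F (- (- int k)) x = 0" using deg_leD[OF assms] by simp
  qed
  then show ?thesis
    unfolding fls_at_def by (simp add: Abs_fls_inverse)
qed

lemma fls_at_nth [simp]: "bounded_deg F \<Longrightarrow> fls_at x F $$ n = F (-n) x"
  using fls_at_nth_deg_le bounded_deg_def by blast

lemma lser_eq_fls_atI:
  assumes "bounded_deg F" "bounded_deg G" "\<And>x. fls_at x F = fls_at x G"
  shows "F = G"
proof (intro ext)
  fix m x
  have "F m x = fls_at x F $$ (-m)" using assms(1) by simp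
  also have "\<dots> = G m x" using assms(2,3) by simp
  finally show "F m x = G m x" .
qed

lemma fls_times_nth_bounds:
  fixes f g :: "'a::comm_ring_1 fls"
  assumes f0: "\<forall>i<a. f $$ i = 0" and g0: "\<forall>i<b. g $$ i = 0"
  shows "(f * g) $$ n = (\<Sum>i=a..n-b. f $$ i * g $$ (n-i))"
proof (cases "f = 0 \<or> g = 0")
  case True
  then show ?thesis by auto
next
  case False
  then have "a \<le> fls_subdegree f" "b \<le> fls_subdegree g"
    using f0 g0 nth_fls_subdegree_nonzero by (meson not_le)+
  then have "{fls_subdegree f..n - fls_subdegree g} \<subseteq> {a..n - b}"
    by auto
  moreover have "f $$ i * g $$ (n - i) = 0"
    if "i \<in> {a..n - b} - {fls_subdegree f..n - fls_subdegree g}" for i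
  proof -
    have "i < fls_subdegree f \<or> n - i < fls_subdegree g" using that by auto
    then show ?thesis by (auto simp: fls_eq0_below_subdegree)
  qed
  ultimately show ?thesis
    unfolding fls_times_nth(2) by (intro sum.mono_neutral_left) auto
qed

lemma fls_at_lmul [simp]:
  assumes "bounded_deg F" "bounded_deg G"
  shows "fls_at x (lmul F G) = fls_at x F * fls_at x G"
proof -
  obtain N1 N2 where F: "deg_le N1 F" and G: "deg_le N2 G"
    using assms bounded_deg_def by blast
  show ?thesis
  proof (rule fls_eqI)
    fix n
    have "fls_at x (lmul F G) $$ n = (\<Sum>i\<in>{-n-N2..N1}. F i x * G (-n-i) x)"
      by (simp add: fls_at_nth_deg_le[OF deg_le_lmul[OF F G]] lmul_eq_sum[OF F G])
    also have "\<dots> = (\<Sum>i=-N1..n-(-N2). F (-i) x * G (-(n-i)) x)"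
      by (rule sum.reindex_bij_witness[of _ uminus uminus]) auto
    also have "\<dots> = (\<Sum>i=-N1..n-(-N2). fls_at x F $$ i * fls_at x G $$ (n-i))"
      by (simp add: fls_at_nth_deg_le[OF F] fls_at_nth_deg_le[OF G])
    also have "\<dots> = (fls_at x F * fls_at x G) $$ n"
      by (rule fls_times_nth_bounds[symmetric])
        (auto simp: fls_at_nth_deg_le[OF F] fls_at_nth_deg_le[OF G] intro!: deg_leD[OF F] deg_leD[OF G])
    finally show "fls_at x (lmul F G) $$ n = (fls_at x F * fls_at x G) $$ n" .
  qed
qed

lemma fls_at_lsub [simp]:
  "bounded_deg F \<Longrightarrow> bounded_deg G \<Longrightarrow> fls_at x (lsub F G) = fls_at x F - fls_at x G"
  by (rule fls_eqI) simp

lemma fls_at_ladd [simp]: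
  "bounded_deg F \<Longrightarrow> bounded_deg G \<Longrightarrow> fls_at x (ladd F G) = fls_at x F + fls_at x G"
  by (rule fls_eqI) simp

lemma fls_at_lneg [simp]: "bounded_deg F \<Longrightarrow> fls_at x (lneg F) = - fls_at x F"
  by (rule fls_eqI) simp

lemma fls_at_lconst [simp]: "fls_at x (lconst c) = fls_const (c x)"
  by (rule fls_eqI) simp

lemma fls_at_lone [simp]: "fls_at x lone = 1"
  by (simp add: lone_eq_lconst)

lemma fls_at_lshift [simp]: "bounded_deg F \<Longrightarrow> fls_at x (lshift F) = fls_X_inv * fls_at x F"
  by (rule fls_eqI) (simp add: fls_X_inv_times_conv_shift)

lemma fls_at_ldv [simp]:
  "bounded_deg F \<Longrightarrow> fls_at x (ldv F) = - (fls_X ^ 2 * fls_deriv (fls_at x F))"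
  by (rule fls_eqI) (simp add: fls_X_power_times_conv_shift algebra_simps)

lemma fls_at_lpow [simp]: "bounded_deg F \<Longrightarrow> fls_at x (lpow F n) = fls_at x F ^ n"
  by (induction n) auto

text \<open>The derivatives in t_n and in s are derivatives along the coordinate lines
  y \<mapsto> \<gamma> x y, which pass through x at the parameter value c x.\<close>

locale coord_line =
  fixes \<gamma> :: "pt \<Rightarrow> real \<Rightarrow> pt" and c :: "pt \<Rightarrow> real"
  assumes \<gamma>_at_c [simp]: "\<gamma> x (c x) = x"
begin

definition coef_deriv :: "coef \<Rightarrow> coef" where
  "coef_deriv f = (\<lambda>x. deriv (\<lambda>y. f (\<gamma> x y)) (c x))"

definition coef_differentiable :: "coef \<Rightarrow> bool" where
  "coef_differentiable f \<longleftrightarrow> (\<forall>x. (\<lambda>y. f (\<gamma> x y)) differentiable (at (c x)))"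

definition ser_deriv :: "lser \<Rightarrow> lser" where
  "ser_deriv F = (\<lambda>m. coef_deriv (F m))"

definition ser_differentiable :: "lser \<Rightarrow> bool" where
  "ser_differentiable F \<longleftrightarrow> (\<forall>m. coef_differentiable (F m))"

lemma coef_deriv_has_derivative:
  "coef_differentiable f \<Longrightarrow> ((\<lambda>y. f (\<gamma> x y)) has_field_derivative coef_deriv f x) (at (c x))"
  unfolding coef_differentiable_def coef_deriv_def
  using DERIV_deriv_iff_real_differentiable by blast

lemma coef_derivI:
  assumes "\<And>x. ((\<lambda>y. f (\<gamma> x y)) has_field_derivative f' x) (at (c x))"
  shows "coef_differentiable f" and "coef_deriv f = f'"
  using assms DERIV_imp_deriv real_differentiable_def
  unfolding coef_differentiable_def coef_deriv_def by blast+

lemma ser_deriv_apply: "ser_deriv F m = coef_deriv (F m)"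
  by (simp add: ser_deriv_def)

lemma ser_differentiableD: "ser_differentiable F \<Longrightarrow> coef_differentiable (F m)"
  by (simp add: ser_differentiable_def)

lemma coef_deriv_const [simp]: "coef_deriv (\<lambda>_. a) = (\<lambda>_. 0)"
  by (simp add: coef_deriv_def)

lemma coef_differentiable_const [simp]: "coef_differentiable (\<lambda>_. a)"
  by (simp add: coef_differentiable_def)

lemma deg_le_ser_deriv: "deg_le N F \<Longrightarrow> deg_le N (ser_deriv F)"
  by (simp add: deg_le_def ser_deriv_def)

lemma bounded_deg_ser_deriv [simp]: "bounded_deg F \<Longrightarrow> bounded_deg (ser_deriv F)"
  unfolding bounded_deg_def using deg_le_ser_deriv by blast

lemma ser_deriv_lpos: "ser_deriv (lpos F) = lpos (ser_deriv F)"
  by (auto simp: ser_deriv_def lpos_def)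

lemma ser_differentiable_lpos: "ser_differentiable F \<Longrightarrow> ser_differentiable (lpos F)"
  by (simp add: ser_differentiable_def lpos_def)

lemma ser_deriv_lshift: "ser_deriv (lshift F) = lshift (ser_deriv F)"
  by (simp add: ser_deriv_def lshift_def)

lemma ser_differentiable_lshift: "ser_differentiable F \<Longrightarrow> ser_differentiable (lshift F)"
  by (simp add: ser_differentiable_def)



lemma lmul_has_derivative:
  assumes F: "deg_le N1 F" and G: "deg_le N2 G"
    and dF: "ser_differentiable F" and dG: "ser_differentiable G"
  shows "((\<lambda>y. lmul F G m (\<gamma> x y)) has_field_derivative
           ladd (lmul (ser_deriv F) G) (lmul F (ser_deriv G)) m x) (at (c x))"
proof -
  have "((\<lambda>y. \<Sum>i\<in>{m-N2..N1}. F i (\<gamma> x y) * G (m-i) (\<gamma> x y)) has_field_derivative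
     (\<Sum>i\<in>{m-N2..N1}. coef_deriv (F i) x * G (m-i) (\<gamma> x (c x))
        + coef_deriv (G (m-i)) x * F i (\<gamma> x (c x)))) (at (c x))"
    using coef_deriv_has_derivative[OF ser_differentiableD[OF dF]]
      coef_deriv_has_derivative[OF ser_differentiableD[OF dG]]
    by (intro DERIV_sum DERIV_mult) auto
  then show ?thesis
    by (simp add: lmul_eq_sum[OF F G] lmul_eq_sum[OF deg_le_ser_deriv[OF F] G]
        lmul_eq_sum[OF F deg_le_ser_deriv[OF G]] ser_deriv_apply sum.distrib algebra_simps)
qed

lemma ser_deriv_lone: "ser_deriv lone = lconst (\<lambda>_. 0)"
  by (auto simp: ser_deriv_def lone_def lconst_def)

lemma ser_differentiable_lone: "ser_differentiable lone"
  by (simp add: ser_differentiable_def lone_def)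

lemma ser_differentiable_lmul:
  assumes "bounded_deg F" "bounded_deg G" "ser_differentiable F" "ser_differentiable G"
  shows "ser_differentiable (lmul F G)"
  using assms lmul_has_derivative coef_derivI(1)
  unfolding bounded_deg_def ser_differentiable_def by metis

lemma ser_deriv_lmul:
  assumes "bounded_deg F" "bounded_deg G" "ser_differentiable F" "ser_differentiable G"
  shows "ser_deriv (lmul F G) = ladd (lmul (ser_deriv F) G) (lmul F (ser_deriv G))"
proof -
  obtain N1 N2 where "deg_le N1 F" "deg_le N2 G"
    using assms(1,2) bounded_deg_def by blast
  then show ?thesis
    using lmul_has_derivative[OF _ _ assms(3,4)] coef_derivI(2)
    unfolding ser_deriv_def by (intro ext) metis
qed

lemma ser_differentiable_lpow:
  assumes "bounded_deg F" "ser_differentiable F"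
  shows "ser_differentiable (lpow F n)"
  by (induction n) (simp_all add: assms ser_differentiable_lone ser_differentiable_lmul)

lemma fls_at_ser_deriv_lpow:
  assumes "bounded_deg F" "ser_differentiable F"
  shows "fls_at x (ser_deriv (lpow F n)) = of_nat n * fls_at x F ^ (n - 1) * fls_at x (ser_deriv F)"
proof (induction n)
  case 0
  have "fls_at x (ser_deriv (lpow F 0)) = fls_const 0"
    unfolding lpow.simps ser_deriv_lone fls_at_lconst ..
  then show ?case by simp
next
  case (Suc n)
  have "fls_at x (ser_deriv (lpow F (Suc n)))
      = fls_at x (ser_deriv F) * fls_at x F ^ n + fls_at x F * fls_at x (ser_deriv (lpow F n))"
    by (simp add: ser_deriv_lmul ser_differentiable_lpow assms)
  also have "\<dots> = fls_at x (ser_deriv F) * fls_at x F ^ n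
      + fls_at x F * (of_nat n * fls_at x F ^ (n - 1) * fls_at x (ser_deriv F))"
    by (simp only: Suc.IH)
  also have "\<dots> = of_nat (Suc n) * fls_at x F ^ n * fls_at x (ser_deriv F)"
    by (cases n) (simp_all add: algebra_simps)
  finally show ?case by simp
qed

end

definition t_line :: "nat \<Rightarrow> pt \<Rightarrow> real \<Rightarrow> pt" where
  "t_line n x y = ((fst x)(n := y), fst (snd x), snd (snd x))"

definition s_line :: "pt \<Rightarrow> real \<Rightarrow> pt" where
  "s_line x y = (fst x, fst (snd x), y)"

interpretation dt: coord_line "t_line n" "\<lambda>x. fst x n"
  rewrites "coord_line.coef_deriv (t_line n) (\<lambda>x. fst x n) = dTc n"
    and "coord_line.ser_deriv (t_line n) (\<lambda>x. fst x n) = dT n"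
  for n
proof -
  show line: "coord_line (t_line n) (\<lambda>x. fst x n)"
    by unfold_locales (simp add: t_line_def)
  show coef: "coord_line.coef_deriv (t_line n) (\<lambda>x. fst x n) = dTc n"
    by (auto simp: coord_line.coef_deriv_def[OF line] dTc_def t_line_def fun_eq_iff)
  show "coord_line.ser_deriv (t_line n) (\<lambda>x. fst x n) = dT n"
    by (simp add: fun_eq_iff coord_line.ser_deriv_def[OF line] dT_def coef)
qed

interpretation ds: coord_line s_line "\<lambda>x. snd (snd x)"
  rewrites "coord_line.coef_deriv s_line (\<lambda>x. snd (snd x)) = dSc"
    and "coord_line.ser_deriv s_line (\<lambda>x. snd (snd x)) = dS"
proof -
  show line: "coord_line s_line (\<lambda>x. snd (snd x))"
    by unfold_locales (simp add: s_line_def)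
  show coef: "coord_line.coef_deriv s_line (\<lambda>x. snd (snd x)) = dSc"
    by (auto simp: coord_line.coef_deriv_def[OF line] dSc_def s_line_def fun_eq_iff)
  show "coord_line.ser_deriv s_line (\<lambda>x. snd (snd x)) = dS"
    by (simp add: fun_eq_iff coord_line.ser_deriv_def[OF line] dS_def coef)
qed

lemma sep_diff_dt: "sep_diff f \<Longrightarrow> 1 \<le> n \<Longrightarrow> dt.coef_differentiable n f"
  by (auto simp: sep_diff_def dt.coef_differentiable_def t_line_def)

lemma sep_diff_ds: "sep_diff f \<Longrightarrow> ds.coef_differentiable f"
  by (auto simp: sep_diff_def ds.coef_differentiable_def s_line_def)

section \<open>Change of spectral variable\<close>

text \<open>shift_coeff w j m is the coefficient of k^m in the expansion of (k + w)^j in decreasing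
  powers of k (for integer j); toK u re-expands p^j = (k - u)^j with w = -u.\<close>

definition shift_coeff :: "real \<Rightarrow> int \<Rightarrow> int \<Rightarrow> real" where
  "shift_coeff w j m = (if m \<le> j then (of_int j gchoose nat (j - m)) * w ^ nat (j - m) else 0)"

lemma shift_coeff_eq_0 [simp]: "j < m \<Longrightarrow> shift_coeff w j m = 0"
  by (simp add: shift_coeff_def)

lemma shift_coeff_diag [simp]: "shift_coeff w j j = 1"
  by (simp add: shift_coeff_def)

lemma shift_coeff_nonneg_neg:
  assumes "0 \<le> j" "m < 0"
  shows "shift_coeff w j m = 0"
proof -
  have "(of_int j gchoose nat (j - m) :: real) = of_nat (nat j choose nat (j - m))"
    using assms binomial_gbinomial[of "nat j" "nat (j - m)", where 'a = real] by simp
  also have "nat j choose nat (j - m) = 0"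
    using assms by (intro binomial_eq_0) linarith
  finally show ?thesis by (simp add: shift_coeff_def)
qed

lemma shift_coeff_deriv:
  "of_int (m + 1) * shift_coeff w j (m + 1) = of_int j * shift_coeff w (j - 1) m"
proof (cases "m + 1 \<le> j")
  case True
  define k where "k = nat (j - m - 1)"
  have "(of_int j - of_nat k) * ((of_int j :: real) gchoose k) = of_int j * ((of_int j - 1) gchoose k)"
    by (rule gbinomial_absorb_comp)
  moreover have "(of_int j :: real) - of_nat k = of_int (m + 1)"
    using True by (simp add: k_def)
  moreover have "nat (j - (m + 1)) = k" "nat (j - 1 - m) = k"
    by (simp_all add: k_def)
  ultimately show ?thesis
    using True by (simp add: shift_coeff_def)
qed simp

lemma shift_coeff_has_derivative:
  "((\<lambda>w. shift_coeff w j m) has_real_derivative of_int (m + 1) * shift_coeff w j (m + 1)) (at w)"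
proof (cases "m < j")
  case True
  define k where "k = nat (j - m - 1)"
  have k: "nat (j - m) = Suc k" "nat (j - (m + 1)) = k"
    using True by (simp_all add: k_def)
  have "(of_int j :: real) * (of_int j gchoose k)
      = of_nat k * (of_int j gchoose k) + of_nat (Suc k) * (of_int j gchoose Suc k)"
    by (rule gbinomial_mult_1)
  moreover have "(of_int j :: real) - of_nat k = of_int (m + 1)"
    using True by (simp add: k_def)
  ultimately have binom: "of_nat (Suc k) * ((of_int j :: real) gchoose Suc k)
      = of_int (m + 1) * (of_int j gchoose k)"
    by (simp add: algebra_simps)
  have "((\<lambda>w. (of_int j gchoose Suc k) * w ^ Suc k) has_real_derivative
      (of_int j gchoose Suc k) * (of_nat (Suc k) * w ^ k)) (at w)"
    using DERIV_pow[of "Suc k" w] by (intro DERIV_cmult) simp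
  moreover have "(\<lambda>w. shift_coeff w j m) = (\<lambda>w. (of_int j gchoose Suc k) * w ^ Suc k)"
    using True unfolding shift_coeff_def k(1) by simp
  moreover have "of_int (m + 1) * shift_coeff w j (m + 1) = (of_int (m + 1) * (of_int j gchoose k)) * w ^ k"
    using True unfolding shift_coeff_def k(2) by simp
  ultimately show ?thesis
    unfolding binom[symmetric] by (simp add: algebra_simps)
next
  case False
  then have "(\<lambda>w. shift_coeff w j m) = (\<lambda>_. if j = m then 1 else 0)"
    by (auto simp: fun_eq_iff)
  then show ?thesis
    using False by simp
qed

lemma shift_coeff_convolution:
  assumes lo: "lo \<le> m - l" and hi: "j \<le> hi"
  shows "(\<Sum>i\<in>{lo..hi}. shift_coeff w j i * shift_coeff w l (m - i)) = shift_coeff w (j + l) m"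
proof -
  have restrict: "(\<Sum>i\<in>{lo..hi}. shift_coeff w j i * shift_coeff w l (m - i))
      = (\<Sum>i\<in>{m-l..j}. shift_coeff w j i * shift_coeff w l (m - i))"
    using lo hi by (intro sum.mono_neutral_right) (auto simp: not_le)
  show ?thesis
  proof (cases "m \<le> j + l")
    case False
    then show ?thesis unfolding restrict by simp
  next
    case True
    define K where "K = nat (j + l - m)"
    have "(\<Sum>i\<in>{m-l..j}. shift_coeff w j i * shift_coeff w l (m - i))
        = (\<Sum>k\<in>{0..K}. ((of_int j gchoose k) * w ^ k) * ((of_int l gchoose (K - k)) * w ^ (K - k)))"
    proof (rule sum.reindex_bij_witness[of _ "\<lambda>k. j - int k" "\<lambda>i. nat (j - i)"])
      fix i assume i: "i \<in> {m-l..j}"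
      have "nat (l - (m - i)) = K - nat (j - i)"
        using i by (simp add: K_def nat_diff_distrib[symmetric] algebra_simps)
      then show "(of_int j gchoose nat (j - i)) * w ^ nat (j - i) *
          ((of_int l gchoose (K - nat (j - i))) * w ^ (K - nat (j - i)))
          = shift_coeff w j i * shift_coeff w l (m - i)"
        using i by (simp add: shift_coeff_def)
    qed (use True in \<open>auto simp: K_def\<close>)
    also have "\<dots> = w ^ K * (\<Sum>k=0..K. (of_int j gchoose k) * (of_int l gchoose (K - k)))"
      unfolding sum_distrib_left
      by (intro sum.cong refl) (simp add: power_add[symmetric] algebra_simps)
    also have "\<dots> = w ^ K * ((of_int j + of_int l) gchoose K)"
      by (simp add: gbinomial_Vandermonde)
    also have "\<dots> = shift_coeff w (j + l) m"
      using True by (simp add: shift_coeff_def K_def)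
    finally show ?thesis unfolding restrict .
  qed
qed

lemma toK_eq_sum:
  assumes F: "deg_le N F" and A: "A \<le> m"
  shows "toK u F m x = (\<Sum>j\<in>{A..N}. F j x * shift_coeff (- u x) j m)"
  unfolding toK_def
proof (rule sum.mono_neutral_cong_left)
  show "{j. m \<le> j \<and> F j x \<noteq> 0} \<subseteq> {A..N}"
  proof
    fix j assume "j \<in> {j. m \<le> j \<and> F j x \<noteq> 0}"
    then have "m \<le> j" "\<not> N < j"
      using deg_leD[OF F, of j x] by auto
    then show "j \<in> {A..N}" using A by auto
  qed
qed (auto simp: shift_coeff_def)

lemma deg_le_toK: "deg_le N F \<Longrightarrow> deg_le N (toK u F)"
  unfolding deg_le_def[of N "toK u F"] by (auto simp: toK_eq_sum[of N F m m for m])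

lemma bounded_deg_toK [simp]: "bounded_deg F \<Longrightarrow> bounded_deg (toK u F)"
  unfolding bounded_deg_def using deg_le_toK by blast

lemma toK_lsub:
  assumes "bounded_deg F" "bounded_deg G"
  shows "toK u (lsub F G) = lsub (toK u F) (toK u G)"
proof (intro ext)
  fix m x
  obtain N where F: "deg_le N F" and G: "deg_le N G"
    using assms deg_le_mono unfolding bounded_deg_def by (metis max.cobounded1 max.cobounded2)
  show "toK u (lsub F G) m x = lsub (toK u F) (toK u G) m x"
    by (simp add: toK_eq_sum[OF F order_refl] toK_eq_sum[OF G order_refl]
        toK_eq_sum[OF deg_le_lsub[OF F G, simplified] order_refl] sum_subtractf[symmetric] algebra_simps)
qed

lemma toK_lneg:
  assumes "bounded_deg F"
  shows "toK u (lneg F) = lneg (toK u F)"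
proof (intro ext)
  fix m x
  obtain N where F: "deg_le N F"
    using assms bounded_deg_def by blast
  show "toK u (lneg F) m x = lneg (toK u F) m x"
    by (simp add: toK_eq_sum[OF F order_refl] toK_eq_sum[OF deg_le_lneg[OF F] order_refl]
        sum_negf[symmetric])
qed

lemma toK_lconst: "toK u (lconst a) = lconst a"
proof (intro ext)
  fix m x
  show "toK u (lconst a) m x = lconst a m x"
  proof (cases "m \<le> 0")
    case True
    have "toK u (lconst a) m x = (\<Sum>j\<in>{m..0}. lconst a j x * shift_coeff (- u x) j m)"
      by (rule toK_eq_sum[OF deg_le_lconst order_refl])
    also have "\<dots> = (\<Sum>j\<in>{0}. lconst a j x * shift_coeff (- u x) j m)"
      using True by (intro sum.mono_neutral_right) auto
    finally show ?thesis
      using True shift_coeff_nonneg_neg[of 0 m "- u x"] by (cases "m = 0") auto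
  next
    case False
    then show ?thesis
      using deg_leD[OF deg_le_toK[OF deg_le_lconst], of m] by simp
  qed
qed

lemma toK_lone: "toK u lone = lone"
  by (simp add: lone_eq_lconst toK_lconst)

lemma Pk_eq_toK: "Pk L = toK (L 0) (lshift lone)"
proof (intro ext)
  fix m x
  have X: "deg_le 1 (lshift lone)"
    using deg_le_lshift[OF deg_le_lone] by simp
  show "Pk L m x = toK (L 0) (lshift lone) m x"
  proof (cases "m \<le> 1")
    case True
    have "toK (L 0) (lshift lone) m x = (\<Sum>j\<in>{m..1}. lshift lone j x * shift_coeff (- L 0 x) j m)"
      by (rule toK_eq_sum[OF X order_refl])
    also have "\<dots> = (\<Sum>j\<in>{1}. lshift lone j x * shift_coeff (- L 0 x) j m)"
      using True by (intro sum.mono_neutral_right) (auto simp: lone_def)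
    also have "\<dots> = shift_coeff (- L 0 x) 1 m"
      by (simp add: lone_def)
    finally show ?thesis
      using True shift_coeff_nonneg_neg[of 1 m]
      by (cases "m = 1 \<or> m = 0") (auto simp: Pk_def shift_coeff_def)
  next
    case False
    then show ?thesis
      using deg_leD[OF deg_le_toK[OF X], of m] by (simp add: Pk_def)
  qed
qed

lemma toK_lpos:
  assumes "bounded_deg F"
  shows "toK u (lpos F) = lpos (toK u F)"
proof (intro ext)
  fix m x
  obtain N where F: "deg_le N F"
    using assms bounded_deg_def by blast
  have "(\<Sum>j\<in>{m..N}. (if 0 \<le> j then F j x else 0) * shift_coeff (- u x) j m)
      = (if 0 \<le> m then \<Sum>j\<in>{m..N}. F j x * shift_coeff (- u x) j m else 0)"
    using shift_coeff_nonneg_neg[of _ m "- u x"] by (auto intro!: sum.neutral sum.cong)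
  then show "toK u (lpos F) m x = lpos (toK u F) m x"
    by (simp add: toK_eq_sum[OF F order_refl] toK_eq_sum[OF deg_le_lpos[OF F] order_refl])
qed

lemma toK_ldv:
  assumes "bounded_deg F"
  shows "toK u (ldv F) = ldv (toK u F)"
proof (intro ext)
  fix m x
  obtain N where F: "deg_le N F"
    using assms bounded_deg_def by blast
  have F1: "deg_le (N + 1) F" and dF: "deg_le N (ldv F)"
    using deg_le_mono[OF F] deg_le_mono[OF deg_le_ldv[OF F]] by simp_all
  have "ldv (toK u F) m x = of_int (m + 1) * (\<Sum>j\<in>{m..N+1}. F j x * shift_coeff (- u x) j (m + 1))"
    using toK_eq_sum[OF F1, of m "m + 1"] by simp
  also have "\<dots> = (\<Sum>j\<in>{m..N+1}. F j x * (of_int (m + 1) * shift_coeff (- u x) j (m + 1)))"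
    by (simp add: sum_distrib_left algebra_simps)
  also have "\<dots> = (\<Sum>j\<in>{m..N+1}. F j x * (of_int j * shift_coeff (- u x) (j - 1) m))"
    by (simp only: shift_coeff_deriv)
  also have "\<dots> = (\<Sum>j\<in>{m+1..N+1}. F j x * (of_int j * shift_coeff (- u x) (j - 1) m))"
    by (rule sum.mono_neutral_right) auto
  also have "\<dots> = (\<Sum>j\<in>{m..N}. ldv F j x * shift_coeff (- u x) j m)"
    by (rule sum.reindex_bij_witness[of _ "\<lambda>j. j + 1" "\<lambda>j. j - 1"]) (auto simp: algebra_simps)
  also have "\<dots> = toK u (ldv F) m x"
    by (simp add: toK_eq_sum[OF dF order_refl])
  finally show "toK u (ldv F) m x = ldv (toK u F) m x" ..
qed

lemma lmul_toK_eq_double_sum: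
  assumes F: "deg_le N1 F" and G: "deg_le N2 G"
  shows "lmul (toK u F) (toK u G) m x = (\<Sum>j\<in>{m-N2..N1}. \<Sum>l\<in>{m-N1..N2}.
      F j x * G l x * shift_coeff (- u x) (j + l) m)"
proof -
  let ?c = "shift_coeff (- u x)" and ?I = "{m-N2..N1}" and ?J = "{m-N2..N1}" and ?L = "{m-N1..N2}"
  have "lmul (toK u F) (toK u G) m x = (\<Sum>i\<in>?I. toK u F i x * toK u G (m-i) x)"
    by (rule lmul_eq_sum[OF deg_le_toK[OF F] deg_le_toK[OF G]])
  also have "\<dots> = (\<Sum>i\<in>?I. (\<Sum>j\<in>?J. F j x * ?c j i) * (\<Sum>l\<in>?L. G l x * ?c l (m-i)))"
    by (intro sum.cong refl) (simp add: toK_eq_sum[OF F, of "m-N2"] toK_eq_sum[OF G, of "m-N1"])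
  also have "\<dots> = (\<Sum>i\<in>?I. \<Sum>j\<in>?J. \<Sum>l\<in>?L. F j x * G l x * (?c j i * ?c l (m-i)))"
    by (simp add: sum_product algebra_simps)
  also have "\<dots> = (\<Sum>j\<in>?J. \<Sum>i\<in>?I. \<Sum>l\<in>?L. F j x * G l x * (?c j i * ?c l (m-i)))"
    by (rule sum.swap[of "\<lambda>i j. \<Sum>l\<in>?L. F j x * G l x * (?c j i * ?c l (m-i))"])
  also have "\<dots> = (\<Sum>j\<in>?J. \<Sum>l\<in>?L. \<Sum>i\<in>?I. F j x * G l x * (?c j i * ?c l (m-i)))"
    by (intro sum.cong refl sum.swap)
  also have "\<dots> = (\<Sum>j\<in>?J. \<Sum>l\<in>?L. F j x * G l x * (\<Sum>i\<in>?I. ?c j i * ?c l (m-i)))"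
    by (simp add: sum_distrib_left)
  also have "\<dots> = (\<Sum>j\<in>?J. \<Sum>l\<in>?L. F j x * G l x * ?c (j + l) m)"
    by (intro sum.cong refl) (simp add: shift_coeff_convolution)
  finally show ?thesis .
qed

lemma toK_lmul_eq_double_sum:
  assumes F: "deg_le N1 F" and G: "deg_le N2 G"
  shows "toK u (lmul F G) m x = (\<Sum>j\<in>{m-N2..N1}. \<Sum>l\<in>{m-N1..N2}.
      F j x * G l x * shift_coeff (- u x) (j + l) m)"
proof -
  let ?c = "shift_coeff (- u x)" and ?J = "{m-N2..N1}" and ?L = "{m-N1..N2}" and ?R = "{m..N1+N2}"
  have shift: "(\<Sum>r\<in>?R. G (r-j) x * ?c r m) = (\<Sum>l\<in>?L. G l x * ?c (j+l) m)"
    if j: "j \<le> N1" for j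
  proof -
    have "(\<Sum>r\<in>?R. G (r-j) x * ?c r m) = (\<Sum>l\<in>{m-j..N1+N2-j}. G l x * ?c (j+l) m)"
      by (rule sum.reindex_bij_witness[of _ "\<lambda>l. j + l" "\<lambda>r. r - j"]) auto
    also have "\<dots> = (\<Sum>l\<in>?L. G l x * ?c (j+l) m)"
    proof (rule sum.mono_neutral_cong)
      show "G l x * ?c (j+l) m = 0" if "l \<in> ?L - {m-j..N1+N2-j}" for l
        using that j by auto
      show "G l x * ?c (j+l) m = 0" if "l \<in> {m-j..N1+N2-j} - ?L" for l
      proof -
        have "N2 < l" using that j by auto
        then show ?thesis using deg_leD[OF G] by simp
      qed
    qed auto
    finally show ?thesis .
  qed
  have "toK u (lmul F G) m x = (\<Sum>r\<in>?R. lmul F G r x * ?c r m)"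
    by (rule toK_eq_sum[OF deg_le_lmul[OF F G] order_refl])
  also have "\<dots> = (\<Sum>r\<in>?R. (\<Sum>j\<in>?J. F j x * G (r-j) x) * ?c r m)"
    by (intro sum.cong refl) (auto simp: lmul_eq_sum_over[OF F G])
  also have "\<dots> = (\<Sum>j\<in>?J. F j x * (\<Sum>r\<in>?R. G (r-j) x * ?c r m))"
    by (simp add: sum_distrib_left sum_distrib_right sum.swap[of _ ?J] algebra_simps)
  also have "\<dots> = (\<Sum>j\<in>?J. \<Sum>l\<in>?L. F j x * G l x * ?c (j + l) m)"
    by (intro sum.cong refl) (simp add: shift sum_distrib_left algebra_simps)
  finally show ?thesis .
qed

lemma toK_lmul:
  assumes "bounded_deg F" "bounded_deg G"
  shows "toK u (lmul F G) = lmul (toK u F) (toK u G)"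
proof -
  obtain N1 N2 where "deg_le N1 F" "deg_le N2 G"
    using assms bounded_deg_def by blast
  then show ?thesis
    by (intro ext) (simp add: toK_lmul_eq_double_sum lmul_toK_eq_double_sum)
qed

lemma toK_lpow: "bounded_deg F \<Longrightarrow> toK u (lpow F n) = lpow (toK u F) n"
  by (induction n) (simp_all add: toK_lone toK_lmul)

context coord_line
begin

lemma toK_has_derivative:
  assumes F: "deg_le N F" and dF: "ser_differentiable F" and du: "coef_differentiable u"
  shows "((\<lambda>y. toK u F m (\<gamma> x y)) has_field_derivative
           toK u (ser_deriv F) m x - coef_deriv u x * ldv (toK u F) m x) (at (c x))"
proof -
  let ?c = "\<lambda>z j m. shift_coeff (- u z) j m"
  have "((\<lambda>y. \<Sum>j\<in>{m..N}. F j (\<gamma> x y) * ?c (\<gamma> x y) j m) has_field_derivative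
      (\<Sum>j\<in>{m..N}. coef_deriv (F j) x * ?c (\<gamma> x (c x)) j m
        + of_int (m + 1) * ?c (\<gamma> x (c x)) j (m + 1) * - coef_deriv u x * F j (\<gamma> x (c x))))
      (at (c x))"
    using coef_deriv_has_derivative[OF ser_differentiableD[OF dF]] coef_deriv_has_derivative[OF du]
    by (intro DERIV_sum DERIV_mult DERIV_chain2[OF shift_coeff_has_derivative] DERIV_minus) auto
  moreover have "toK u F m = (\<lambda>z. \<Sum>j\<in>{m..N}. F j z * ?c z j m)"
    using toK_eq_sum[OF F order_refl] by blast
  moreover have "toK u (ser_deriv F) m x = (\<Sum>j\<in>{m..N}. coef_deriv (F j) x * ?c x j m)"
    by (simp add: toK_eq_sum[OF deg_le_ser_deriv[OF F] order_refl] ser_deriv_apply)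
  moreover have "ldv (toK u F) m x = of_int (m + 1) * (\<Sum>j\<in>{m..N}. F j x * ?c x j (m + 1))"
    using toK_eq_sum[OF F, of m "m + 1"] by simp
  ultimately show ?thesis
    by (simp add: sum_subtractf sum_distrib_left algebra_simps)
qed

lemma ser_deriv_toK:
  assumes "bounded_deg F" "ser_differentiable F" "coef_differentiable u"
  shows "ser_deriv (toK u F) = toK u (lsub (ser_deriv F) (lmul (lconst (coef_deriv u)) (ldv F)))"
proof -
  obtain N where "deg_le N F"
    using assms(1) bounded_deg_def by blast
  then have "ser_deriv (toK u F) = lsub (toK u (ser_deriv F)) (lmul (lconst (coef_deriv u)) (ldv (toK u F)))"
    using coef_derivI(2)[OF toK_has_derivative] assms(2,3)
    by (auto simp: fun_eq_iff ser_deriv_def lmul_lconst)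
  also have "\<dots> = toK u (lsub (ser_deriv F) (lmul (lconst (coef_deriv u)) (ldv F)))"
    by (simp add: assms toK_lsub toK_lmul toK_lconst toK_ldv)
  finally show ?thesis .
qed

end

lemma bounded_deg_kBr [simp]: "bounded_deg A \<Longrightarrow> bounded_deg B \<Longrightarrow> bounded_deg (kBr A B)"
  by (simp add: kBr_def)

lemma kBr_toK:
  assumes "bounded_deg A" "bounded_deg B"
    and "dt.ser_differentiable 1 A" "dt.ser_differentiable 1 B" "dt.coef_differentiable 1 u"
  shows "kBr (toK u A) (toK u B) = toK u (kBr A B)"
proof -
  let ?c = "lconst (dTc 1 u)"
  have "kBr (toK u A) (toK u B) = toK u (lsub (lmul (ldv A) (lsub (dT 1 B) (lmul ?c (ldv B))))
      (lmul (lsub (dT 1 A) (lmul ?c (ldv A))) (ldv B)))"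
    unfolding kBr_def dt.ser_deriv_toK[OF assms(1,3,5)] dt.ser_deriv_toK[OF assms(2,4,5)]
      toK_ldv[OF assms(1), symmetric] toK_ldv[OF assms(2), symmetric]
    by (simp add: assms toK_lmul toK_lsub)
  also have "\<dots> = toK u (kBr A B)"
    unfolding kBr_def by (rule arg_cong[where f = "toK u"], rule lser_eq_fls_atI) (simp_all add: assms algebra_simps)
  finally show ?thesis .
qed

section \<open>The t-flows of the Lax series L\<close>

lemma lmul_lone: "bounded_deg F \<Longrightarrow> lmul F lone = F"
  by (rule lser_eq_fls_atI) simp_all

lemma lmul_leading_coeff:
  assumes "deg_le a F" "deg_le b G"
  shows "lmul F G (a + b) x = F a x * G b x"
  using assms by (simp add: lmul_eq_sum)

lemma ldv_lshift_lone: "ldv (lshift lone) = lone"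
  by (auto simp: lone_def fun_eq_iff)

lemma kBr_lshift_lone:
  assumes "bounded_deg B"
  shows "kBr (lshift lone) B = dT 1 B"
proof -
  have "dT 1 (lshift lone) = lshift (lconst (\<lambda>_. 0))"
    unfolding dt.ser_deriv_lshift dt.ser_deriv_lone ..
  then show ?thesis
    unfolding kBr_def ldv_lshift_lone \<open>dT 1 (lshift lone) = _\<close>
    by (intro lser_eq_fls_atI) (simp_all add: assms)
qed

lemma lshift_lone_dt_differentiable: "dt.ser_differentiable k (lshift lone)"
  by (intro dt.ser_differentiable_lshift dt.ser_differentiable_lone)

locale toda_L =
  fixes L :: lser
  assumes L_lead: "L 1 = (\<lambda>_. 1)"
    and L_top: "\<forall>m>1. L m = (\<lambda>_. 0)"
    and L_smooth: "\<forall>m. sep_diff (L m)"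
    and L_t: "\<forall>n\<ge>1. dT n L = todaBr (Bp L n) L"
begin

abbreviation u1 :: coef where "u1 \<equiv> L 0"

lemma deg_le_L: "deg_le 1 L"
  using L_top by (simp add: deg_le_def)

lemma bounded_deg_L [simp]: "bounded_deg L"
  using deg_le_L by (rule bounded_degI)

lemma bounded_deg_Bp [simp]: "bounded_deg (Bp L n)"
  by (simp add: Bp_def)

lemma L_dt_differentiable: "1 \<le> k \<Longrightarrow> dt.ser_differentiable k L"
  using L_smooth sep_diff_dt by (simp add: dt.ser_differentiable_def)

lemma L_ds_differentiable: "ds.ser_differentiable L"
  using L_smooth sep_diff_ds by (simp add: ds.ser_differentiable_def)

lemma Bp_dt_differentiable: "1 \<le> k \<Longrightarrow> dt.ser_differentiable k (Bp L n)"
  unfolding Bp_def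
  by (intro dt.ser_differentiable_lpos dt.ser_differentiable_lpow L_dt_differentiable bounded_deg_L)

lemma Bp_ds_differentiable: "ds.ser_differentiable (Bp L n)"
  unfolding Bp_def
  by (intro ds.ser_differentiable_lpos ds.ser_differentiable_lpow L_ds_differentiable bounded_deg_L)

lemma L_flow: "1 \<le> n \<Longrightarrow> dT n L = todaBr (Bp L n) L"
  using L_t by blast

lemma L_const_above: "0 < m \<Longrightarrow> \<exists>a. L m = (\<lambda>_. a)"
  using L_lead L_top by (cases "m = 1") auto

lemma ds_L_above:
  assumes "0 < m"
  shows "dS L m = (\<lambda>_. 0)"
proof -
  obtain a where "L m = (\<lambda>_. a)"
    using L_const_above[OF assms] by blast
  then show ?thesis by (simp add: dS_def)
qed

lemma deg_le_ds_L: "deg_le 0 (dS L)"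
  using ds_L_above by (simp add: deg_le_def)

lemma Bp_1: "Bp L 1 = lpos L"
  by (simp add: Bp_def lmul_lone)

lemma ldv_lpos_L: "ldv (lpos L) = lone"
proof (intro ext)
  fix m x
  show "ldv (lpos L) m x = lone m x"
    using deg_leD[OF deg_le_L, of "m + 1" x] L_lead by (cases "m = -1") (auto simp: lone_def)
qed

lemma ds_lpos_L: "dS (lpos L) = lconst (dSc u1)"
  using ds_L_above by (auto simp: fun_eq_iff dS_def lpos_def lconst_def)

text \<open>Since B_1 = p + u_1, the Toda bracket with B_1 is p times the derivation
  d/ds - (du_1/ds) d/dp.\<close>

lemma dT1_L: "dT 1 L = lshift (lsub (dS L) (lmul (lconst (dSc u1)) (ldv L)))"
  unfolding L_flow[OF order_refl] todaBr_def Bp_1 ldv_lpos_L ds_lpos_L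
  by (intro lser_eq_fls_atI) (simp_all add: algebra_simps)

lemma dT1_lpow:
  "dT 1 (lpow L n) = lshift (lsub (dS (lpow L n)) (lmul (lconst (dSc u1)) (ldv (lpow L n))))"
  by (rule lser_eq_fls_atI)
    (simp_all add: dt.fls_at_ser_deriv_lpow ds.fls_at_ser_deriv_lpow L_dt_differentiable
      L_ds_differentiable dT1_L[simplified] fls_deriv_power algebra_simps)

lemma ldv_dS_lpow_L_commute: "lmul (ldv (lpow L n)) (dS L) = lmul (dS (lpow L n)) (ldv L)"
  by (rule lser_eq_fls_atI)
    (simp_all add: ds.fls_at_ser_deriv_lpow L_ds_differentiable fls_deriv_power algebra_simps)

lemma todaBr_Bp_L:
  "todaBr (Bp L n) L = lshift (lsub (lmul (dS (lnegpart (lpow L n))) (ldv L))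
                                     (lmul (ldv (lnegpart (lpow L n))) (dS L)))"
proof -
  let ?P = "lpow L n"
  let ?B = "lpos ?P" and ?N = "lnegpart ?P"
  have ldv_split: "ldv ?P = ladd (ldv ?B) (ldv ?N)"
    by (auto simp: fun_eq_iff algebra_simps)
  have dS_split: "dS ?P = ladd (dS ?B) (dS ?N)"
    by (auto simp: fun_eq_iff dS_def lpos_def lnegpart_def)
  have "lsub (lmul (ldv ?B) (dS L)) (lmul (dS ?B) (ldv L))
      = lsub (lmul (dS ?N) (ldv L)) (lmul (ldv ?N) (dS L))"
  proof (rule lser_eq_fls_atI)
    fix x
    have "fls_at x (lmul (ldv ?P) (dS L)) = fls_at x (lmul (dS ?P) (ldv L))"
      by (simp only: ldv_dS_lpow_L_commute)
    then have "(fls_at x (ldv ?B) + fls_at x (ldv ?N)) * fls_at x (dS L)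
        = (fls_at x (dS ?B) + fls_at x (dS ?N)) * fls_at x (ldv L)"
      unfolding ldv_split dS_split
      by (simp only: fls_at_lmul fls_at_ladd bounded_deg_ladd bounded_deg_ldv ds.bounded_deg_ser_deriv
          bounded_deg_lpos bounded_deg_lnegpart bounded_deg_lpow bounded_deg_L)
    then show "fls_at x (lsub (lmul (ldv ?B) (dS L)) (lmul (dS ?B) (ldv L)))
        = fls_at x (lsub (lmul (dS ?N) (ldv L)) (lmul (ldv ?N) (dS L)))"
      by (simp only: fls_at_lmul fls_at_lsub bounded_deg_lmul bounded_deg_ldv ds.bounded_deg_ser_deriv
          bounded_deg_lpos bounded_deg_lnegpart bounded_deg_lpow bounded_deg_L) (simp add: algebra_simps)
  qed simp_all
  then show ?thesis
    unfolding todaBr_def Bp_def by (auto simp: fun_eq_iff)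
qed

text \<open>This is the constant term of the t_n-flow: by the previous lemma only the residue of
  L^n contributes to it.\<close>

lemma dTc_u1: "1 \<le> n \<Longrightarrow> dTc n u1 = dSc (lpow L n (-1))"
proof (intro ext)
  fix x assume "1 \<le> n"
  let ?N = "lnegpart (lpow L n)"
  have "lmul (dS ?N) (ldv L) (-1 + 0) x = dS ?N (-1) x * ldv L 0 x"
    by (rule lmul_leading_coeff[OF ds.deg_le_ser_deriv[OF deg_le_lnegpart]
          deg_le_mono[OF deg_le_ldv[OF deg_le_L], of 0]]) simp
  moreover have "lmul (ldv ?N) (dS L) (-1) x = 0"
    using deg_leD[OF deg_le_lmul[OF deg_le_ldv[OF deg_le_lnegpart] deg_le_ds_L]] by simp
  moreover have "dTc n u1 x = todaBr (Bp L n) L 0 x"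
    using L_flow[OF \<open>1 \<le> n\<close>] unfolding dT_def by metis
  ultimately show "dTc n u1 x = dSc (lpow L n (-1)) x"
    using L_lead by (simp add: todaBr_Bp_L dS_def lnegpart_def)
qed

text \<open>Projecting the t_1-flow of L^n: (p X)_{\<ge>0} = p X_{\<ge>0} + X_{-1}, and the extra constant
  term is du_1/dt_n by the previous lemma.\<close>

lemma dT1_Bp:
  assumes "1 \<le> n"
  shows "dT 1 (Bp L n) = ladd (lconst (dTc n u1))
           (lshift (lsub (dS (Bp L n)) (lmul (lconst (dSc u1)) (ldv (Bp L n)))))"
proof -
  have lhs: "dT 1 (Bp L n)
      = lpos (lshift (lsub (dS (lpow L n)) (lmul (lconst (dSc u1)) (ldv (lpow L n)))))"
    unfolding Bp_def dt.ser_deriv_lpos dT1_lpow ..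
  show ?thesis
    unfolding lhs using dTc_u1[OF assms]
    by (auto simp: fun_eq_iff Bp_def ds.ser_deriv_lpos lmul_lconst dS_def lpos_def)
qed

lemma L_t_flow_fixed_p:
  assumes "1 \<le> n"
  shows "kBr (Bp L n) L = lsub (dT n L) (lmul (lconst (dTc n u1)) (ldv L))"
  unfolding kBr_def dT1_L dT1_Bp[OF assms] L_flow[OF assms] todaBr_def
  by (intro lser_eq_fls_atI) (simp_all add: algebra_simps)

lemma L_s_flow_fixed_p:
  "kBr (lshift lone) L = lmul (lsub (dS L) (lmul (lconst (dSc u1)) (ldv L))) (lshift lone)"
  unfolding kBr_lshift_lone[OF bounded_deg_L] dT1_L
  by (intro lser_eq_fls_atI) (simp_all add: algebra_simps)

lemma Bp_s_flow_fixed_p: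
  assumes "1 \<le> n"
  shows "lmul (lneg (lsub (dS (Bp L n)) (lmul (lconst (dSc u1)) (ldv (Bp L n))))) (lshift lone)
       = lsub (lneg (lsub (dT n (lshift lone)) (lmul (lconst (dTc n u1)) (ldv (lshift lone)))))
           (kBr (lshift lone) (Bp L n))"
proof -
  have "dT n (lshift lone) = lshift (lconst (\<lambda>_. 0))"
    unfolding dt.ser_deriv_lshift dt.ser_deriv_lone ..
  then show ?thesis
    unfolding kBr_lshift_lone[OF bounded_deg_Bp] dT1_Bp[OF assms] ldv_lshift_lone
    by (intro lser_eq_fls_atI) (simp_all add: algebra_simps)
qed

lemma u1_dt_differentiable: "1 \<le> k \<Longrightarrow> dt.coef_differentiable k u1"
  using L_dt_differentiable dt.ser_differentiableD by blast

lemma u1_ds_differentiable: "ds.coef_differentiable u1"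
  using L_ds_differentiable ds.ser_differentiableD by blast

lemma Lk_eq_toK: "Lk L = toK u1 L"
  by (simp add: Lk_def)

lemma Bk_eq_toK: "Bk L n = toK u1 (Bp L n)"
  unfolding Bk_def Bp_def Lk_eq_toK toK_lpow[OF bounded_deg_L, symmetric]
  by (simp add: toK_lpos)

lemma Lk_t_flow:
  assumes "1 \<le> n"
  shows "dT n (Lk L) = kBr (Bk L n) (Lk L)"
proof -
  have "dT n (Lk L) = toK u1 (kBr (Bp L n) L)"
    unfolding Lk_eq_toK L_t_flow_fixed_p[OF assms]
    by (rule dt.ser_deriv_toK[OF bounded_deg_L L_dt_differentiable[OF assms]
          u1_dt_differentiable[OF assms]])
  also have "\<dots> = kBr (Bk L n) (Lk L)"
    unfolding Lk_eq_toK Bk_eq_toK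
    by (rule kBr_toK[symmetric])
      (simp_all add: Bp_dt_differentiable L_dt_differentiable u1_dt_differentiable)
  finally show ?thesis .
qed

lemma Lk_s_flow: "lmul (dS (Lk L)) (Pk L) = kBr (Pk L) (Lk L)"
proof -
  have "lmul (dS (Lk L)) (Pk L) = toK u1 (kBr (lshift lone) L)"
    unfolding Lk_eq_toK Pk_eq_toK L_s_flow_fixed_p
      ds.ser_deriv_toK[OF bounded_deg_L L_ds_differentiable u1_ds_differentiable]
    by (simp add: toK_lmul)
  also have "\<dots> = kBr (Pk L) (Lk L)"
    unfolding Lk_eq_toK Pk_eq_toK
    by (rule kBr_toK[symmetric])
      (simp_all add: lshift_lone_dt_differentiable L_dt_differentiable u1_dt_differentiable)
  finally show ?thesis .
qed

lemma Bk_s_flow: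
  assumes "1 \<le> n"
  shows "lmul (lneg (dS (Bk L n))) (Pk L) = lsub (lneg (dT n (Pk L))) (kBr (Pk L) (Bk L n))"
proof -
  let ?p = "lshift lone" and ?B = "Bp L n"
  have "lmul (lneg (dS (Bk L n))) (Pk L)
      = toK u1 (lmul (lneg (lsub (dS ?B) (lmul (lconst (dSc u1)) (ldv ?B)))) ?p)"
    unfolding Bk_eq_toK Pk_eq_toK
      ds.ser_deriv_toK[OF bounded_deg_Bp Bp_ds_differentiable u1_ds_differentiable]
    by (simp add: toK_lneg toK_lmul)
  also have "\<dots> = toK u1 (lsub (lneg (lsub (dT n ?p) (lmul (lconst (dTc n u1)) (ldv ?p)))) (kBr ?p ?B))"
    unfolding Bp_s_flow_fixed_p[OF assms] ..
  also have "\<dots> = lsub (lneg (dT n (Pk L))) (kBr (Pk L) (Bk L n))"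
    unfolding Bk_eq_toK Pk_eq_toK
      dt.ser_deriv_toK[OF bounded_deg_lshift[OF bounded_deg_lone] lshift_lone_dt_differentiable
        u1_dt_differentiable[OF assms]]
      kBr_toK[OF bounded_deg_lshift[OF bounded_deg_lone] bounded_deg_Bp lshift_lone_dt_differentiable
        Bp_dt_differentiable[OF order_refl] u1_dt_differentiable[OF order_refl]]
    by (simp add: toK_lneg toK_lsub)
  finally show ?thesis .
qed

end

theorem mainTheorem6:
  fixes L Lbinv :: lser
  assumes L_lead: "L 1 = (\<lambda>_. 1)"
    and L_top: "\<forall>m>1. L m = (\<lambda>_. 0)"
    and Lbinv_bot: "\<forall>m< -1. Lbinv m = (\<lambda>_. 0)"
    and ubar0_nz: "\<forall>x. Lbinv (-1) x \<noteq> 0"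
    and smooth: "\<forall>m. sep_diff (L m) \<and> sep_diff (Lbinv m)"
    and L_t: "\<forall>n\<ge>1. dT n L = todaBr (Bp L n) L"
    and L_tb: "\<forall>n\<ge>1. dTb n L = todaBr (Bbar Lbinv n) L"
    and Lbinv_t: "\<forall>n\<ge>1. dT n Lbinv = todaBr (Bp L n) Lbinv"
    and Lbinv_tb: "\<forall>n\<ge>1. dTb n Lbinv = todaBr (Bbar Lbinv n) Lbinv"
  shows "\<forall>n\<ge>1.
           dT n (Lk L) = kBr (Bk L n) (Lk L)
         \<and> lmul (dS (Lk L)) (Pk L) = kBr (Pk L) (Lk L)
         \<and> lmul (lneg (dS (Bk L n))) (Pk L) = lsub (lneg (dT n (Pk L))) (kBr (Pk L) (Bk L n))"
proof -
  interpret toda_L L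
    using L_lead L_top smooth L_t by unfold_locales auto
  show ?thesis
    using Lk_t_flow Lk_s_flow Bk_s_flow by blast
qed

end
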